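(* Let $\mu$ be a probability measure, $1<p\le 2$, and equip $L^1(\mu)$ with the Luxemburg norm $\|\cdot\|$ associated to the Orlicz function $M$ (defined in the context). Let $X$ be a closed subspace of $L^1(\mu)$ with $X\subset L^p(\mu)$ such that the norms $\|\cdot\|_p$ and $\|\cdot\|_1$ are equivalent on $X$. Then $(X,\|\cdot\|)$ has modulus of smoothness of power type $p$, i.e. there is $C>0$ with $\rho_X(\tau)\le C\tau^p$ for all $\tau>0$, and modulus of convexity of power type $2$.
   Context: Let $\varphi(t)=2$ for $0\le t\le 1$ and $\varphi(t)=8/(1+t)^2$ for $t>1$, and let $M(t)=\int_0^{|t|}\varphi(u)(|t|-u)\,du$ for $t\in\mathbb{R}$. The Luxemburg norm is $\|f\|=\inf\{\lambda>0:\int_\Omega M(f/\lambda)\,d\mu\le 1\}$. Moduli of $(X,\|\cdot\|)$: $\delta_X(\varepsilon)=\inf\{1-\|\tfrac{x+y}{2}\| : \|x\|=\|y\|=1,\ \|x-y\|=\varepsilon\}$ and $\rho_X(\tau)=\sup\{\tfrac{\|x+\tau y\|+\|x-\tau y\|}{2}-1 : \|x\|=\|y\|=1\}$, with $x,y\in X$. Power type 2 convexity means $\delta_X(\varepsilon)\ge c\varepsilon^2$ for some $c>0$. *)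

theory Defs
  imports "HOL-Analysis.Analysis" "HOL-Probability.Probability"
begin

definition phi :: "real \<Rightarrow> real" where
  "phi t = (if t \<le> 1 then 2 else 8 / (1 + t)\<^sup>2)"

definition orliczM :: "real \<Rightarrow> real" where
  "orliczM t = integral {0..\<bar>t\<bar>} (\<lambda>u. phi u * (\<bar>t\<bar> - u))"

definition lux :: "'a measure \<Rightarrow> ('a \<Rightarrow> real) \<Rightarrow> real" where
  "lux mu f = Inf {lam. lam > 0 \<and> (\<integral>\<^sup>+ x. ennreal (orliczM (f x / lam)) \<partial>mu) \<le> 1}"

text \<open>Modulus of convexity of (X, Luxemburg norm); infimum taken in ereal (Inf {} = \<infinity>).\<close>
definition mod_convexity :: "'a measure \<Rightarrow> ('a \<Rightarrow> real) set \<Rightarrow> real \<Rightarrow> ereal" where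
  "mod_convexity mu X eps = Inf {ereal (1 - lux mu (\<lambda>t. (x t + y t) / 2)) | x y.
      x \<in> X \<and> y \<in> X \<and> lux mu x = 1 \<and> lux mu y = 1 \<and> lux mu (\<lambda>t. x t - y t) = eps}"

text \<open>Modulus of smoothness of (X, Luxemburg norm); supremum taken in ereal (Sup {} = -\<infinity>).\<close>
definition mod_smoothness :: "'a measure \<Rightarrow> ('a \<Rightarrow> real) set \<Rightarrow> real \<Rightarrow> ereal" where
  "mod_smoothness mu X tau = Sup {ereal ((lux mu (\<lambda>t. x t + tau * y t) + lux mu (\<lambda>t. x t - tau * y t)) / 2 - 1) | x y.
      x \<in> X \<and> y \<in> X \<and> lux mu x = 1 \<and> lux mu y = 1}"

definition Lp_norm :: "'a measure \<Rightarrow> real \<Rightarrow> ('a \<Rightarrow> real) \<Rightarrow> real" where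
  "Lp_norm mu p f = (\<integral>x. \<bar>f x\<bar> powr p \<partial>mu) powr (1 / p)"

definition L1_norm :: "'a measure \<Rightarrow> ('a \<Rightarrow> real) \<Rightarrow> real" where
  "L1_norm mu f = (\<integral>x. \<bar>f x\<bar> \<partial>mu)"

text \<open>X is a linear subspace of L^1(mu) (functions as representatives).\<close>
definition L1_subspace :: "'a measure \<Rightarrow> ('a \<Rightarrow> real) set \<Rightarrow> bool" where
  "L1_subspace mu X \<longleftrightarrow> (\<forall>f\<in>X. integrable mu f) \<and> (\<lambda>x. 0) \<in> X \<and>
     (\<forall>f\<in>X. \<forall>g\<in>X. (\<lambda>x. f x + g x) \<in> X) \<and> (\<forall>c. \<forall>f\<in>X. (\<lambda>x. c * f x) \<in> X)"

definition L1_closed :: "'a measure \<Rightarrow> ('a \<Rightarrow> real) set \<Rightarrow> bool" where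
  "L1_closed mu X \<longleftrightarrow> (\<forall>fs f. (\<forall>n. fs n \<in> X) \<and> integrable mu f \<and>
      (\<lambda>n. L1_norm mu (\<lambda>x. fs n x - f x)) \<longlonglongrightarrow> 0 \<longrightarrow> f \<in> X)"

end

theory Submission
  imports Defs
begin

(* The Orlicz function M has the closed form Mc; its derivative psi = M' is odd, bounded
   by 6, 2-Lipschitz and strongly monotone with modulus 2/(1+w)^2 on [-w,w].  This gives
   two pointwise inequalities: the Taylor bound M(a+k) <= M(a) + psi(a) k + 12|k|^p for
   1 < p <= 2, and the midpoint bound M((a+b)/2) <= (M a + M b)/2 - W/4 with the weight
   W = (a-b)^2/(1+max|a||b|)^2.  For the modular N(g) = int M(g) we show |g| <= 6||g||_1,
   that |g| = 1 forces N(g) = 1 and (on a probability space) ||g||_1 <= 2, and that a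
   defect of N below 1 gives a proportional defect of the Luxemburg norm |g|.
   Convexity: integrating the midpoint bound gives N((x+y)/2) <= 1 - int W/4; truncating
   at a level K and using Young's inequality together with ||x-y||_p <= B ||x-y||_1 gives
   int W >= ||x-y||_1^2/(4(1+K)^2), hence 1 - |(x+y)/2| >= c |x-y|^2.
   Smoothness: integrating the Taylor bound at (x + tau y)/lambda, with lambda chosen so
   that the first order terms cancel, gives |x +- tau y| <= 1 +- tau l + E tau^p for small
   tau; for large tau the bound |x + tau y| <= 12 + 12 tau suffices.  Only the upper
   estimate of ||.||_p by ||.||_1 and the linear structure of X are used. *)

section \<open>The Orlicz function and its derivative\<close>

lemma has_field_derivative_glue:
  fixes f g h :: "real \<Rightarrow> real"
  assumes g: "(g has_field_derivative D) (at a)" and h: "(h has_field_derivative D) (at a)"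
    and fa: "f a = g a" "f a = h a"
    and el: "eventually (\<lambda>x. f x = g x) (at_left a)"
    and er: "eventually (\<lambda>x. f x = h x) (at_right a)"
  shows "(f has_field_derivative D) (at a)"
proof -
  have G: "((\<lambda>y. (g y - g a) / (y - a)) \<longlongrightarrow> D) (at a)"
    using g by (simp add: has_field_derivative_iff)
  have H: "((\<lambda>y. (h y - h a) / (y - a)) \<longlongrightarrow> D) (at a)"
    using h by (simp add: has_field_derivative_iff)
  have L: "((\<lambda>y. (f y - f a) / (y - a)) \<longlongrightarrow> D) (at_left a)"
  proof (rule Lim_transform_eventually[OF tendsto_within_subset[OF G]])
    show "eventually (\<lambda>y. (g y - g a) / (y - a) = (f y - f a) / (y - a)) (at_left a)"
      using el by eventually_elim (simp add: fa(1))
  qed simp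
  have R: "((\<lambda>y. (f y - f a) / (y - a)) \<longlongrightarrow> D) (at_right a)"
  proof (rule Lim_transform_eventually[OF tendsto_within_subset[OF H]])
    show "eventually (\<lambda>y. (h y - h a) / (y - a) = (f y - f a) / (y - a)) (at_right a)"
      using er by eventually_elim (simp add: fa(2))
  qed simp
  show ?thesis using L R by (simp add: has_field_derivative_iff filterlim_at_split)
qed

text \<open>Closed form of the Orlicz function M and of its derivative.\<close>
definition Mc :: "real \<Rightarrow> real" where
  "Mc t = (if \<bar>t\<bar> \<le> 1 then t\<^sup>2 else 6*\<bar>t\<bar> - 5 - 8*ln((1+\<bar>t\<bar>)/2))"

definition psi :: "real \<Rightarrow> real" where
  "psi t = (if \<bar>t\<bar> \<le> 1 then 2*t else sgn t * (6 - 8/(1+\<bar>t\<bar>)))"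

lemma Mc_even: "Mc (-t) = Mc t"
  by (simp add: Mc_def)

lemma psi_odd: "psi (-t) = - psi t"
  by (simp add: psi_def)

lemma Mc0: "Mc 0 = 0"
  by (simp add: Mc_def)

lemma psi0: "psi 0 = 0"
  by (simp add: psi_def)

lemma psi_ge1: "1 \<le> t \<Longrightarrow> psi t = 6 - 8/(1+t)"
  by (cases "t = 1") (auto simp: psi_def)

lemma Mc_deriv_right:
  assumes "-1 < t"
  shows "(Mc has_real_derivative psi t) (at t)"
proof -
  consider "\<bar>t\<bar> < 1" | "t > 1" | "t = 1" using assms by linarith
  then show ?thesis
  proof cases
    case 1
    have "eventually (\<lambda>x. x \<in> {-1<..<1}) (nhds t)"
      using 1 by (intro eventually_nhds_in_open) auto
    then have "eventually (\<lambda>x. Mc x = x\<^sup>2) (nhds t)"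
      by eventually_elim (auto simp: Mc_def)
    moreover have "((\<lambda>x. x\<^sup>2) has_real_derivative 2*t) (at t)"
      by (auto intro!: derivative_eq_intros)
    ultimately show ?thesis using 1
      by (subst DERIV_cong_ev[of t t Mc "\<lambda>x. x\<^sup>2" "psi t" "2*t"]) (auto simp: psi_def)
  next
    case 2
    have "eventually (\<lambda>x. x \<in> {1<..}) (nhds t)"
      using 2 by (intro eventually_nhds_in_open) auto
    then have "eventually (\<lambda>x. Mc x = 6*x - 5 - 8*ln((1+x)/2)) (nhds t)"
      by eventually_elim (auto simp: Mc_def)
    moreover have "((\<lambda>x. 6*x - 5 - 8*ln((1+x)/2)) has_real_derivative 6 - 8/(1+t)) (at t)"
      using 2 by (auto intro!: derivative_eq_intros simp: field_simps)
    ultimately show ?thesis using 2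
      by (subst DERIV_cong_ev[of t t Mc "\<lambda>x. 6*x - 5 - 8*ln((1+x)/2)" "psi t" "6 - 8/(1+t)"])
         (auto simp: psi_def)
  next
    case 3
    have g: "((\<lambda>x. x\<^sup>2) has_real_derivative 2) (at 1)"
      by (auto intro!: derivative_eq_intros)
    have h: "((\<lambda>x. 6*x - 5 - 8*ln((1+x)/2)) has_real_derivative 2) (at 1)"
      by (auto intro!: derivative_eq_intros simp: field_simps)
    have "eventually (\<lambda>x. x \<in> {0<..<1}) (at_left (1::real))"
      by (rule eventually_at_left_real) simp
    then have el: "eventually (\<lambda>x. Mc x = x\<^sup>2) (at_left 1)"
      by eventually_elim (auto simp: Mc_def)
    have "eventually (\<lambda>x. x \<in> {1<..<2}) (at_right (1::real))"
      by (rule eventually_at_right_real) simp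
    then have er: "eventually (\<lambda>x. Mc x = 6*x - 5 - 8*ln((1+x)/2)) (at_right 1)"
      by eventually_elim (auto simp: Mc_def)
    have "(Mc has_real_derivative 2) (at 1)"
      by (rule has_field_derivative_glue[OF g h _ _ el er]) (auto simp: Mc_def)
    then show ?thesis using 3 by (simp add: psi_def)
  qed
qed

lemma Mc_deriv: "(Mc has_real_derivative psi t) (at t)"
proof (cases "-1 < t")
  case False
  have "((\<lambda>x. Mc (-x)) has_real_derivative psi (-t) * -1) (at t)"
    using False by (intro DERIV_chain2[OF Mc_deriv_right]) (auto intro!: derivative_eq_intros)
  then show ?thesis by (simp add: Mc_even psi_odd)
qed (rule Mc_deriv_right)

lemma orlicz_integral_quadratic_part:
  assumes b: "0 \<le> b" "b \<le> 1"
  shows "((\<lambda>u. phi u * (a - u)) has_integral (2*a*b - b\<^sup>2)) {0..b}"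
proof -
  have "((\<lambda>u. 2*(a-u)) has_integral ((2*a*b - b\<^sup>2) - (2*a*0 - 0\<^sup>2))) {0..b}"
  proof (rule fundamental_theorem_of_calculus[where f="\<lambda>u. 2*a*u - u\<^sup>2"])
    fix x assume "x \<in> {0..b}"
    have "((\<lambda>u. 2*a*u - u\<^sup>2) has_real_derivative (2*(a-x))) (at x)"
      by (auto intro!: derivative_eq_intros simp: algebra_simps)
    then show "((\<lambda>u. 2*a*u - u\<^sup>2) has_vector_derivative (2*(a-x))) (at x within {0..b})"
      by (simp add: has_real_derivative_iff_has_vector_derivative has_vector_derivative_at_within)
  qed (use b in simp)
  then show ?thesis using b
    by (subst has_integral_cong[where g="\<lambda>u. 2*(a-u)"]) (auto simp: phi_def)
qed

lemma orlicz_integral_tail_part: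
  assumes a: "1 \<le> a"
  shows "((\<lambda>u. phi u * (a - u)) has_integral (4*a - 4 - 8*ln((1+a)/2))) {1..a}"
proof -
  define F where "F u = -8*(a+1)/(1+u) - 8*ln(1+u)" for u
  have Fd: "(F has_real_derivative 8*(a-u)/(1+u)\<^sup>2) (at u)" if u: "u \<ge> 1" for u
  proof -
    have "(F has_real_derivative (8*(a+1)/(1+u)\<^sup>2 - 8/(1+u))) (at u)"
      unfolding F_def using u by (auto intro!: derivative_eq_intros simp: power2_eq_square)
    moreover have "8/(1+u) = 8*(1+u)/(1+u)\<^sup>2" unfolding power2_eq_square
      by (rule nonzero_mult_divide_mult_cancel_right[symmetric]) (use u in simp)
    then have "8*(a+1)/(1+u)\<^sup>2 - 8/(1+u) = 8*(a-u)/(1+u)\<^sup>2"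
      by (simp add: diff_divide_distrib[symmetric] algebra_simps)
    ultimately show ?thesis by simp
  qed
  have "((\<lambda>u. 8*(a-u)/(1+u)\<^sup>2) has_integral (F a - F 1)) {1..a}"
  proof (rule fundamental_theorem_of_calculus[where f=F])
    fix x assume "x \<in> {1..a}"
    then have "(F has_real_derivative 8*(a-x)/(1+x)\<^sup>2) (at x)" by (intro Fd) simp
    then show "(F has_vector_derivative (8*(a-x)/(1+x)\<^sup>2)) (at x within {1..a})"
      by (simp add: has_real_derivative_iff_has_vector_derivative has_vector_derivative_at_within)
  qed (use a in simp)
  moreover have "F a - F 1 = 4*a - 4 - 8*ln((1+a)/2)"
    using a by (simp add: F_def ln_div field_simps)
  ultimately show ?thesis
    by (subst has_integral_cong[where g="\<lambda>u. 8*(a-u)/(1+u)\<^sup>2"]) (auto simp: phi_def)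
qed

lemma orliczM_eq: "orliczM t = Mc t"
proof (cases "\<bar>t\<bar> \<le> 1")
  case True
  have "integral {0..\<bar>t\<bar>} (\<lambda>u. phi u * (\<bar>t\<bar> - u)) = \<bar>t\<bar>\<^sup>2"
    using orlicz_integral_quadratic_part[OF _ True, of "\<bar>t\<bar>"]
    by (simp add: integral_unique power2_eq_square)
  then show ?thesis using True by (simp add: orliczM_def Mc_def)
next
  case False
  have "((\<lambda>u. phi u * (\<bar>t\<bar> - u)) has_integral ((2*\<bar>t\<bar>*1 - 1\<^sup>2) + (4*\<bar>t\<bar> - 4 - 8*ln((1+\<bar>t\<bar>)/2))))
      {0..\<bar>t\<bar>}"
    using False orlicz_integral_quadratic_part[of 1 "\<bar>t\<bar>"] orlicz_integral_tail_part[of "\<bar>t\<bar>"]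
    by (intro has_integral_combine[of 0 1 "\<bar>t\<bar>"]) auto
  then have "integral {0..\<bar>t\<bar>} (\<lambda>u. phi u * (\<bar>t\<bar> - u)) = 6*\<bar>t\<bar> - 5 - 8*ln((1+\<bar>t\<bar>)/2)"
    by (simp add: integral_unique)
  then show ?thesis using False by (simp add: orliczM_def Mc_def)
qed

lemma div_le_self_real: "0 \<le> x \<Longrightarrow> 1 \<le> d \<Longrightarrow> x/d \<le> (x::real)"
  by (simp add: divide_le_eq mult_le_cancel_left1 order_trans[of _ x] mult_le_cancel_left)

lemma weight_antimono:
  "0 \<le> (d::real) \<Longrightarrow> 0 \<le> a \<Longrightarrow> a \<le> w \<Longrightarrow> 2/(1+w)\<^sup>2 * d \<le> 2*d/(1+a)\<^sup>2"
proof -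
  assume d: "0 \<le> d" and a: "0 \<le> a" "a \<le> w"
  have "(1+a)\<^sup>2 \<le> (1+w)\<^sup>2" using a by (intro power_mono) auto
  then have "2/(1+w)\<^sup>2 \<le> 2/(1+a)\<^sup>2" using a by (intro frac_le) auto
  then have "2/(1+w)\<^sup>2 * d \<le> 2/(1+a)\<^sup>2 * d" using d by (intro mult_right_mono) auto
  then show ?thesis by simp
qed

lemma abs_le_young_powr:
  assumes p: "1 < (p::real)" and s: "0 < s"
  shows "\<bar>d\<bar> \<le> s + \<bar>d\<bar> powr p / s powr (p-1)"
proof (cases "\<bar>d\<bar> \<le> s")
  case True
  have "0 \<le> \<bar>d\<bar> powr p / s powr (p-1)" by simp
  then show ?thesis using True by linarith
next
  case False
  have "s powr (p-1) \<le> \<bar>d\<bar> powr (p-1)" using False s p by (intro powr_mono2) auto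
  then have "\<bar>d\<bar> * s powr (p-1) \<le> \<bar>d\<bar> * \<bar>d\<bar> powr (p-1)" by (intro mult_left_mono) auto
  also have "\<bar>d\<bar> * \<bar>d\<bar> powr (p-1) = \<bar>d\<bar> powr p"
    using powr_add[of "\<bar>d\<bar>" 1 "p-1"] by simp
  finally have "\<bar>d\<bar> \<le> \<bar>d\<bar> powr p / s powr (p-1)" using s by (simp add: le_divide_eq)
  then show ?thesis using s by linarith
qed

lemma powr_le_of_root_le:
  assumes p: "1 < (p::real)" and I: "0 \<le> I" and le: "I powr (1/p) \<le> c"
  shows "I \<le> c powr p"
proof -
  have "I = (I powr (1/p)) powr p" using p I by (simp add: powr_powr)
  also have "\<dots> \<le> c powr p" using le p by (intro powr_mono2) auto
  finally show ?thesis .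
qed

lemma powr_le_sum_powr:
  assumes p: "1 < (p::real)" "p \<le> 2" and a: "0 \<le> a" and b: "0 \<le> b" and k: "\<bar>k\<bar> \<le> 2*(a+b)"
  shows "\<bar>k\<bar> powr p \<le> 16 * (a powr p + b powr p)"
proof -
  define m where "m = max a b"
  have m0: "0 \<le> m" using a by (simp add: m_def)
  have "\<bar>k\<bar> \<le> 4*m" using k a b by (simp add: m_def)
  then have "\<bar>k\<bar> powr p \<le> (4*m) powr p" using p by (intro powr_mono2) auto
  also have "\<dots> = 4 powr p * m powr p" using m0 by (simp add: powr_mult)
  also have "4 powr p \<le> (4::real) powr 2" using p by (intro powr_mono) auto
  then have "4 powr p * m powr p \<le> 16 * m powr p" by (intro mult_right_mono) auto
  also have "m powr p \<le> a powr p + b powr p" by (simp add: m_def max_def)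
  finally show ?thesis by simp
qed

lemma remainder_le_powr:
  assumes p: "1 < (p::real)" "p \<le> 2"
  shows "\<bar>k\<bar> * min (2*\<bar>k\<bar>) 12 \<le> 12 * \<bar>k\<bar> powr p"
proof (cases "\<bar>k\<bar> \<le> 1")
  case True
  have "\<bar>k\<bar> powr 2 \<le> \<bar>k\<bar> powr p" using True p by (intro powr_mono') auto
  then have "\<bar>k\<bar>\<^sup>2 \<le> \<bar>k\<bar> powr p" by (cases "k = 0") (auto simp: powr_numeral)
  then have "\<bar>k\<bar> * (2*\<bar>k\<bar>) \<le> 12 * \<bar>k\<bar> powr p"
    by (simp add: power2_eq_square) (use powr_ge_zero[of "\<bar>k\<bar>" p] in linarith)
  moreover have "\<bar>k\<bar> * min (2*\<bar>k\<bar>) 12 \<le> \<bar>k\<bar> * (2*\<bar>k\<bar>)" by (intro mult_left_mono) auto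
  ultimately show ?thesis by linarith
next
  case False
  have "\<bar>k\<bar> powr 1 \<le> \<bar>k\<bar> powr p" using False p by (intro powr_mono) auto
  then have "\<bar>k\<bar> \<le> \<bar>k\<bar> powr p" using False by simp
  moreover have "\<bar>k\<bar> * min (2*\<bar>k\<bar>) 12 \<le> \<bar>k\<bar> * 12" by (intro mult_left_mono) auto
  ultimately show ?thesis by linarith
qed

lemma psi_pos_bounds:
  assumes u: "0 \<le> u" and uv: "u \<le> v"
  shows "2*(v-u)/(1+v)\<^sup>2 \<le> psi v - psi u \<and> psi v - psi u \<le> 2*(v-u)"
proof -
  have v0: "0 \<le> v" using u uv by simp
  have sq1: "1 \<le> (1+v)\<^sup>2" using mult_mono[of 1 "1+v" 1 "1+v"] v0 by (simp add: power2_eq_square)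
  consider "v \<le> 1" | "1 \<le> u" | "u < 1" "1 < v" by linarith
  then show ?thesis
  proof cases
    case 1
    then have "psi v - psi u = 2*(v-u)" using u uv by (simp add: psi_def)
    moreover have "2*(v-u)/(1+v)\<^sup>2 \<le> 2*(v-u)" using uv sq1 by (intro div_le_self_real) auto
    ultimately show ?thesis by simp
  next
    case 2
    have pu: "0 < 1+u" "0 < 1+v" using u v0 by auto
    have e: "psi v - psi u = (v-u) * (8/((1+u)*(1+v)))"
      using 2 uv pu by (simp add: psi_ge1 field_simps)
    have w4: "4 \<le> (1+u)*(1+v)" using 2 uv mult_mono[of 2 "1+u" 2 "1+v"] by auto
    have a: "2/(1+v)\<^sup>2 \<le> 8/((1+u)*(1+v))"
      by (rule frac_le) (use pu 2 uv in \<open>auto simp: power2_eq_square intro!: mult_right_mono\<close>)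
    have b: "8/((1+u)*(1+v)) \<le> 2"
      using w4 by (simp add: divide_le_eq)
    have "2*(v-u)/(1+v)\<^sup>2 = (v-u) * (2/(1+v)\<^sup>2)" by simp
    also have "\<dots> \<le> (v-u) * (8/((1+u)*(1+v)))" using a uv by (intro mult_left_mono) auto
    finally have "2*(v-u)/(1+v)\<^sup>2 \<le> psi v - psi u" using e by simp
    moreover have "(v-u) * (8/((1+u)*(1+v))) \<le> (v-u) * 2" using b uv by (intro mult_left_mono) auto
    ultimately show ?thesis using e by simp
  next
    case 3
    have pv: "0 < 1+v" using v0 by auto
    have e: "psi v - psi u = 6 - 8/(1+v) - 2*u" using 3 u by (simp add: psi_def)
    have e2: "6 - 8/(1+v) - 2*u = 4*(v-1)/(1+v) + 2*(1-u)" using pv by (simp add: field_simps)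
    have a: "2/(1+v)\<^sup>2 \<le> 4/(1+v)"
      by (rule frac_le) (use pv sq1 v0 in \<open>auto simp: power2_eq_square\<close>)
    have a2: "2*(v-1)/(1+v)\<^sup>2 \<le> 4*(v-1)/(1+v)"
      using mult_left_mono[OF a, of "v-1"] 3 by (simp add: algebra_simps)
    have b: "2*(1-u)/(1+v)\<^sup>2 \<le> 2*(1-u)" using 3 sq1 by (intro div_le_self_real) auto
    have "2*(v-u)/(1+v)\<^sup>2 = 2*(v-1)/(1+v)\<^sup>2 + 2*(1-u)/(1+v)\<^sup>2" by (simp add: add_divide_distrib[symmetric] algebra_simps)
    then have L: "2*(v-u)/(1+v)\<^sup>2 \<le> psi v - psi u" using a2 b e e2 by linarith
    have e3: "2*(v-u) - (6 - 8/(1+v) - 2*u) = 2*(v-1)\<^sup>2/(1+v)"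
      using pv by (simp add: field_simps power2_eq_square)
    have "0 \<le> 2*(v-1)\<^sup>2/(1+v)" using pv by simp
    then show ?thesis using L e e3 by linarith
  qed
qed

lemma psi_lipschitz:
  assumes uv: "u \<le> v"
  shows "psi v - psi u \<le> 2*(v-u)"
proof -
  consider "0 \<le> u" | "v \<le> 0" | "u < 0" "0 < v" by linarith
  then show ?thesis
  proof cases
    case 1 then show ?thesis using psi_pos_bounds[OF 1 uv] by simp
  next
    case 2
    have "psi (-u) - psi (-v) \<le> 2*((-u)-(-v))" using 2 uv psi_pos_bounds[of "-v" "-u"] by simp
    then show ?thesis by (simp add: psi_odd)
  next
    case 3
    have "psi v - psi 0 \<le> 2 * v" "psi (-u) - psi 0 \<le> 2*(-u)"
      using 3 psi_pos_bounds[of 0 v] psi_pos_bounds[of 0 "-u"] by simp_all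
    then show ?thesis by (simp add: psi_odd psi0)
  qed
qed

lemma psi_strongly_monotone:
  assumes w: "-w \<le> u" "v \<le> w" and uv: "u \<le> v"
  shows "2/(1+w)\<^sup>2 * (v-u) \<le> psi v - psi u"
proof -
  consider "0 \<le> u" | "v \<le> 0" | "u < 0" "0 < v" by linarith
  then show ?thesis
  proof cases
    case 1
    have "2/(1+w)\<^sup>2 * (v-u) \<le> 2*(v-u)/(1+v)\<^sup>2" using 1 uv w by (intro weight_antimono) auto
    then show ?thesis using psi_pos_bounds[OF 1 uv] by linarith
  next
    case 2
    have "2/(1+w)\<^sup>2 * (v-u) \<le> 2*(v-u)/(1+(-u))\<^sup>2" using 2 uv w by (intro weight_antimono) auto
    moreover have "2*((-u)-(-v))/(1+(-u))\<^sup>2 \<le> psi (-u) - psi (-v)"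
      using 2 uv psi_pos_bounds[of "-v" "-u"] by simp
    ultimately show ?thesis by (simp add: psi_odd)
  next
    case 3
    have a: "2/(1+w)\<^sup>2 * v \<le> 2 * v/(1+v)\<^sup>2" using 3 w by (intro weight_antimono) auto
    have b: "2/(1+w)\<^sup>2 * (-u) \<le> 2*(-u)/(1+(-u))\<^sup>2" using 3 w by (intro weight_antimono) auto
    have "2 * v/(1+v)\<^sup>2 \<le> psi v - psi 0" "2*(-u)/(1+(-u))\<^sup>2 \<le> psi (-u) - psi 0"
      using 3 psi_pos_bounds[of 0 v] psi_pos_bounds[of 0 "-u"] by simp_all
    moreover have "2/(1+w)\<^sup>2 * (v-u) = 2/(1+w)\<^sup>2 * v + 2/(1+w)\<^sup>2 * (-u)"
      using distrib_left[of "2/(1+w)\<^sup>2" v "-u"] by simp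
    ultimately show ?thesis using a b by (simp add: psi_odd psi0)
  qed
qed

lemma psi_mono:
  assumes "u \<le> v" shows "psi u \<le> psi v"
proof -
  have "0 \<le> 2/(1 + max \<bar>u\<bar> \<bar>v\<bar>)\<^sup>2 * (v-u)" using assms by simp
  also have "\<dots> \<le> psi v - psi u" using assms by (intro psi_strongly_monotone) auto
  finally show ?thesis by simp
qed

lemma psi_bound: "\<bar>psi t\<bar> \<le> 6"
proof (cases "\<bar>t\<bar> \<le> 1")
  case True then show ?thesis by (simp add: psi_def)
next
  case False
  then have "0 \<le> 6 - 8/(1+\<bar>t\<bar>)" "6 - 8/(1+\<bar>t\<bar>) \<le> 6" by (auto simp: field_simps)
  then show ?thesis using False by (auto simp: psi_def abs_mult abs_sgn_eq)
qed

section \<open>Pointwise inequalities for the Orlicz function\<close>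

lemma Mc_mvt: "a < b \<Longrightarrow> \<exists>z. a < z \<and> z < b \<and> Mc b - Mc a = (b-a) * psi z"
  using MVT2[of a b Mc psi] Mc_deriv by auto

lemma Mc_lipschitz: "\<bar>Mc a - Mc b\<bar> \<le> 6 * \<bar>a - b\<bar>"
proof -
  have *: "\<bar>Mc b - Mc a\<bar> \<le> 6 * \<bar>b - a\<bar>" if ab: "a < b" for a b
  proof -
    obtain z where "Mc b - Mc a = (b-a) * psi z" using Mc_mvt[OF ab] by blast
    then have "\<bar>Mc b - Mc a\<bar> = \<bar>b-a\<bar> * \<bar>psi z\<bar>" by (simp add: abs_mult)
    also have "\<dots> \<le> \<bar>b-a\<bar> * 6" using psi_bound[of z] by (intro mult_left_mono) auto
    finally show ?thesis by simp
  qed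
  show ?thesis
    using *[of a b] *[of b a] by (cases a b rule: linorder_cases) (auto simp: abs_minus_commute)
qed

text \<open>Linear growth from below: \<open>2|t| - 1 \<le> M(t)\<close> for \<open>|t| \<ge> 1\<close>, since \<open>psi \<ge> 2\<close> there.\<close>
lemma Mc_ge_linear:
  assumes t: "1 \<le> \<bar>t\<bar>"
  shows "2*\<bar>t\<bar> - 1 \<le> Mc t"
proof (cases "\<bar>t\<bar> = 1")
  case True
  have "t\<^sup>2 = \<bar>t\<bar>\<^sup>2" by simp
  then show ?thesis using True by (simp add: Mc_def)
next
  case False
  then obtain z where z: "1 < z" "Mc \<bar>t\<bar> - Mc 1 = (\<bar>t\<bar> - 1) * psi z"
    using t Mc_mvt[of 1 "\<bar>t\<bar>"] by auto
  have "2 \<le> psi z" using psi_mono[of 1 z] z by (simp add: psi_def)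
  then have "(\<bar>t\<bar> - 1) * 2 \<le> (\<bar>t\<bar> - 1) * psi z" using t by (intro mult_left_mono) auto
  moreover have "Mc \<bar>t\<bar> = Mc t" by (simp add: Mc_def)
  ultimately show ?thesis using z by (simp add: Mc_def)
qed

lemma Mc_nonneg: "0 \<le> Mc t"
  using Mc_ge_linear[of t] by (cases "\<bar>t\<bar> \<le> 1") (auto simp: Mc_def)

lemma abs_le_Mc: "\<bar>t\<bar> \<le> Mc t + 1"
  using Mc_ge_linear[of t] Mc_nonneg[of t] by (cases "\<bar>t\<bar> \<le> 1") auto

lemma Mc_le_linear: "Mc t \<le> 6 * \<bar>t\<bar>"
  using Mc_lipschitz[of t 0] by (simp add: Mc0)

lemma Mc_le_mult_psi: "Mc t \<le> t * psi t"
proof (cases t "0::real" rule: linorder_cases)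
  case greater
  then obtain z where z: "0 < z" "z < t" "Mc t - Mc 0 = (t - 0) * psi z" using Mc_mvt by blast
  have "t * psi z \<le> t * psi t" using z greater by (intro mult_left_mono psi_mono) auto
  then show ?thesis using z by (simp add: Mc0)
next
  case less
  then obtain z where z: "t < z" "z < 0" "Mc 0 - Mc t = (0 - t) * psi z" using Mc_mvt by blast
  have "(-t) * psi t \<le> (-t) * psi z" using z less by (intro mult_left_mono psi_mono) auto
  then show ?thesis using z by (simp add: Mc0)
qed (simp add: Mc0 psi0)

text \<open>First order Taylor bound with remainder of power type p: since psi is 2-Lipschitz
  and bounded by 6, the remainder is at most \<open>|k| min(2|k|, 12) \<le> 12|k|\<^sup>p\<close>.\<close>
lemma Mc_taylor:
  assumes p: "1 < p" "p \<le> 2"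
  shows "Mc (a + k) \<le> Mc a + psi a * k + 12 * \<bar>k\<bar> powr p"
proof -
  have "Mc (a + k) - Mc a - psi a * k \<le> \<bar>k\<bar> * min (2*\<bar>k\<bar>) 12"
  proof (cases k "0::real" rule: linorder_cases)
    case greater
    then obtain z where z: "a < z" "z < a + k" "Mc (a+k) - Mc a = (a + k - a) * psi z"
      using Mc_mvt[of a "a+k"] by auto
    have "psi z - psi a \<le> 2*k" "psi z - psi a \<le> 12"
      using psi_lipschitz[of a z] z psi_bound[of z] psi_bound[of a] by auto
    then have "k * (psi z - psi a) \<le> k * min (2*k) 12"
      using greater by (intro mult_left_mono) auto
    then show ?thesis using z greater by (simp add: algebra_simps)
  next
    case less
    then obtain z where z: "a + k < z" "z < a" "Mc a - Mc (a+k) = (a - (a + k)) * psi z"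
      using Mc_mvt[of "a+k" a] by auto
    have "psi a - psi z \<le> 2*(-k)" "psi a - psi z \<le> 12"
      using psi_lipschitz[of z a] z psi_bound[of z] psi_bound[of a] by auto
    then have "(-k) * (psi a - psi z) \<le> (-k) * min (2*(-k)) 12"
      using less by (intro mult_left_mono) auto
    then show ?thesis using z less by (simp add: algebra_simps)
  qed simp
  then show ?thesis using remainder_le_powr[OF p, of k] by linarith
qed

text \<open>Quantitative midpoint convexity: \<open>M - m t\<^sup>2/2\<close> with \<open>m = 2/(1+w)\<^sup>2\<close> is convex on \<open>[-w,w]\<close>
  by strong monotonicity of psi, which yields the uniform convexity defect.\<close>
lemma Mc_midpoint:
  "Mc ((a+b)/2) \<le> (Mc a + Mc b)/2 - (a-b)\<^sup>2 / (4*(1 + max \<bar>a\<bar> \<bar>b\<bar>)\<^sup>2)"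
proof -
  define w where "w = max \<bar>a\<bar> \<bar>b\<bar>"
  define m where "m = 2/(1+w)\<^sup>2"
  define G where "G t = Mc t - m * t\<^sup>2 / 2" for t
  have Gd: "(G has_real_derivative (psi x - m * x)) (at x)" for x
    unfolding G_def by (auto intro!: derivative_eq_intros Mc_deriv)
  have convex_G: "G ((a+b)/2) \<le> (G a + G b)/2" if ab: "a < b" "\<bar>a\<bar> \<le> w" "\<bar>b\<bar> \<le> w" for a b
  proof -
    define c where "c = (a+b)/2"
    have ac: "a < c" "c < b" using ab by (auto simp: c_def)
    obtain z1 where z1: "c < z1" "z1 < b" "G b - G c = (b - c) * (psi z1 - m * z1)"
      using MVT2[of c b G "\<lambda>x. psi x - m * x"] Gd ac by auto
    obtain z2 where z2: "a < z2" "z2 < c" "G c - G a = (c - a) * (psi z2 - m * z2)"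
      using MVT2[of a c G "\<lambda>x. psi x - m * x"] Gd ac by auto
    have "m * (z1 - z2) \<le> psi z1 - psi z2"
      unfolding m_def using psi_strongly_monotone[of w z2 z1] z1 z2 ab ac by auto
    then have "psi z2 - m * z2 \<le> psi z1 - m * z1" by (simp add: algebra_simps)
    moreover have "b - c = c - a" by (simp add: c_def field_simps)
    ultimately have "G c - G a \<le> G b - G c"
      using z1 z2 ac by (metis diff_gt_0_iff_gt mult_left_mono order_less_imp_le)
    then show ?thesis unfolding c_def by simp
  qed
  have "G ((a+b)/2) \<le> (G a + G b)/2"
    using convex_G[of a b] convex_G[of b a] unfolding w_def
    by (cases a b rule: linorder_cases) (auto simp: add.commute)
  moreover have "(a-b)\<^sup>2 / (4*(1 + w)\<^sup>2) = m * (a-b)\<^sup>2 / 8"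
    unfolding m_def by simp
  moreover have "m * (a-b)\<^sup>2 / 8 = m * (a\<^sup>2 + b\<^sup>2) / 4 - m * ((a+b)/2)\<^sup>2 / 2"
    by (simp add: power2_eq_square field_simps)
  ultimately show ?thesis unfolding G_def w_def[symmetric] by (simp add: field_simps)
qed

section \<open>The modular and the Luxemburg norm\<close>

definition modular :: "'a measure \<Rightarrow> ('a \<Rightarrow> real) \<Rightarrow> real" where
  "modular mu g = (\<integral>x. Mc (g x) \<partial>mu)"

lemma Mc_measurable[measurable]: "Mc \<in> borel_measurable borel"
  unfolding Mc_def[abs_def] by measurable

lemma psi_measurable[measurable]: "psi \<in> borel_measurable borel"
  unfolding psi_def[abs_def] by measurable

lemma integrable_Mc: "integrable mu g \<Longrightarrow> integrable mu (\<lambda>x. Mc (g x))"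
  by (rule Bochner_Integration.integrable_bound[where f="\<lambda>x. 6 * g x"])
     (auto simp: abs_mult Mc_le_linear Mc_nonneg)

lemma integrable_psi_mult:
  "g \<in> borel_measurable mu \<Longrightarrow> integrable mu h \<Longrightarrow> integrable mu (\<lambda>x. psi (g x) * h x)"
  by (rule Bochner_Integration.integrable_bound[where f="\<lambda>x. 6 * h x"])
     (auto simp: abs_mult intro!: mult_right_mono psi_bound)

lemma nn_integral_orliczM:
  "integrable mu g \<Longrightarrow> (\<integral>\<^sup>+ x. ennreal (orliczM (g x)) \<partial>mu) = ennreal (modular mu g)"
  unfolding modular_def orliczM_eq[abs_def]
  by (rule nn_integral_eq_integral) (auto intro: integrable_Mc Mc_nonneg)

lemma modular_nonneg: "0 \<le> modular mu g"
  unfolding modular_def by (rule integral_nonneg_AE) (auto intro: Mc_nonneg)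

lemma L1_norm_nonneg: "0 \<le> L1_norm mu g"
  unfolding L1_norm_def by (rule integral_nonneg_AE) auto

lemma L1_norm_scale: "L1_norm mu (\<lambda>x. c * g x) = \<bar>c\<bar> * L1_norm mu g"
  unfolding L1_norm_def by (simp add: abs_mult)

lemma L1_norm_add_le:
  assumes x: "integrable mu x" and y: "integrable mu y"
  shows "L1_norm mu (\<lambda>t. x t + c * y t) \<le> L1_norm mu x + \<bar>c\<bar> * L1_norm mu y"
proof -
  have "L1_norm mu (\<lambda>t. x t + c * y t) \<le> (\<integral>t. \<bar>x t\<bar> + \<bar>c\<bar> * \<bar>y t\<bar> \<partial>mu)"
    unfolding L1_norm_def using x y
    by (intro integral_mono) (auto simp: abs_mult[symmetric] abs_triangle_ineq)
  also have "\<dots> = L1_norm mu x + \<bar>c\<bar> * L1_norm mu y"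
    unfolding L1_norm_def using x y by simp
  finally show ?thesis .
qed

lemma modular_lipschitz:
  assumes g: "integrable mu g" and h: "integrable mu h"
  shows "modular mu g \<le> modular mu h + 6 * L1_norm mu (\<lambda>x. g x - h x)"
proof -
  have "modular mu g \<le> (\<integral>x. Mc (h x) + 6 * \<bar>g x - h x\<bar> \<partial>mu)"
    unfolding modular_def
  proof (rule integral_mono)
    show "Mc (g x) \<le> Mc (h x) + 6 * \<bar>g x - h x\<bar>" for x
      using Mc_lipschitz[of "g x" "h x"] by linarith
  qed (use g h in \<open>auto intro: integrable_Mc\<close>)
  also have "\<dots> = modular mu h + 6 * L1_norm mu (\<lambda>x. g x - h x)"
    unfolding modular_def L1_norm_def
    using g h by (subst Bochner_Integration.integral_add) (auto intro: integrable_Mc)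
  finally show ?thesis .
qed

lemma modular_rescale:
  assumes g: "integrable mu g" and lam: "lam > 0"
  shows "modular mu (\<lambda>x. g x / lam) \<le> modular mu g + 6 * \<bar>1/lam - 1\<bar> * L1_norm mu g"
    and "modular mu g \<le> modular mu (\<lambda>x. g x / lam) + 6 * \<bar>1/lam - 1\<bar> * L1_norm mu g"
proof -
  have e1: "(\<lambda>x. g x / lam - g x) = (\<lambda>x. (1/lam - 1) * g x)" by (auto simp: field_simps)
  have e2: "(\<lambda>x. g x - g x / lam) = (\<lambda>x. (1 - 1/lam) * g x)" by (auto simp: field_simps)
  have gi: "integrable mu (\<lambda>x. g x / lam)" using g by auto
  show "modular mu (\<lambda>x. g x / lam) \<le> modular mu g + 6 * \<bar>1/lam - 1\<bar> * L1_norm mu g"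
    using modular_lipschitz[OF gi g] unfolding e1 L1_norm_scale by simp
  show "modular mu g \<le> modular mu (\<lambda>x. g x / lam) + 6 * \<bar>1/lam - 1\<bar> * L1_norm mu g"
    using modular_lipschitz[OF g gi] unfolding e2 L1_norm_scale by (simp add: abs_minus_commute)
qed

definition lux_admissible :: "'a measure \<Rightarrow> ('a \<Rightarrow> real) \<Rightarrow> real set" where
  "lux_admissible mu f = {lam. lam > 0 \<and> (\<integral>\<^sup>+ x. ennreal (orliczM (f x / lam)) \<partial>mu) \<le> 1}"

lemma lux_eq_Inf_admissible: "lux mu f = Inf (lux_admissible mu f)"
  unfolding lux_def lux_admissible_def ..

lemma bdd_below_lux_admissible: "bdd_below (lux_admissible mu f)"
  by (rule bdd_belowI[of _ 0]) (auto simp: lux_admissible_def)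

lemma lux_admissible_iff:
  assumes g: "integrable mu g" and lam: "lam > 0"
  shows "lam \<in> lux_admissible mu g \<longleftrightarrow> modular mu (\<lambda>x. g x / lam) \<le> 1"
  using nn_integral_orliczM[of mu "\<lambda>x. g x / lam"] g lam unfolding lux_admissible_def by simp

lemma lux_le:
  assumes g: "integrable mu g" and lam: "lam > 0" and N: "modular mu (\<lambda>x. g x / lam) \<le> 1"
  shows "lux mu g \<le> lam"
  unfolding lux_eq_Inf_admissible
  using lux_admissible_iff[OF g lam] N by (intro cInf_lower bdd_below_lux_admissible) simp

text \<open>Every \<open>\<lambda> > 6\<parallel>g\<parallel>\<^sub>1\<close> is admissible, because \<open>M(t) \<le> 6|t|\<close>.\<close>
lemma lux_admissible_L1:
  assumes g: "integrable mu g" and lam: "6 * L1_norm mu g < lam"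
  shows "lam \<in> lux_admissible mu g"
proof -
  have lam0: "lam > 0" using lam L1_norm_nonneg[of mu g] by linarith
  have "modular mu (\<lambda>x. g x / lam) \<le> 6 * L1_norm mu (\<lambda>x. g x / lam)"
    using modular_lipschitz[of mu "\<lambda>x. g x / lam" "\<lambda>x. 0"] g by (simp add: modular_def Mc0)
  also have "L1_norm mu (\<lambda>x. g x / lam) = L1_norm mu g / lam"
    using L1_norm_scale[of mu "1/lam" g] lam0 by simp
  also have "6 * (L1_norm mu g / lam) \<le> 1" using lam lam0 by (simp add: divide_le_eq)
  finally show ?thesis using lux_admissible_iff[OF g lam0] by simp
qed

lemma lux_nonneg:
  assumes g: "integrable mu g"
  shows "0 \<le> lux mu g"
  unfolding lux_eq_Inf_admissible
  using lux_admissible_L1[OF g, of "6 * L1_norm mu g + 1"]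
  by (intro cInf_greatest) (auto simp: lux_admissible_def)

lemma lux_le_L1:
  assumes g: "integrable mu g"
  shows "lux mu g \<le> 6 * L1_norm mu g"
proof (rule field_le_epsilon)
  fix e :: real assume "0 < e"
  then have "6 * L1_norm mu g + e \<in> lux_admissible mu g"
    by (intro lux_admissible_L1[OF g]) simp
  then show "lux mu g \<le> 6 * L1_norm mu g + e"
    unfolding lux_eq_Inf_admissible by (rule cInf_lower[OF _ bdd_below_lux_admissible])
qed

text \<open>On the unit sphere the modular is at most 1: admissible scalings \<open>\<lambda> \<ge> 1\<close> close to 1
  exist, and rescaling by them changes the modular by \<open>O(\<lambda> - 1)\<close>.\<close>
lemma modular_le_one_of_lux:
  assumes g: "integrable mu g" and l1: "lux mu g = 1"
  shows "modular mu g \<le> 1"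
proof (rule field_le_epsilon)
  fix e :: real assume e: "0 < e"
  define L where "L = L1_norm mu g"
  have L0: "0 \<le> L" using L1_norm_nonneg unfolding L_def by blast
  define e' where "e' = e / (6*L + 1)"
  have e': "0 < e'" using e L0 by (simp add: e'_def)
  have ne: "lux_admissible mu g \<noteq> {}"
    using lux_admissible_L1[OF g, of "6 * L1_norm mu g + 1"] by auto
  have "Inf (lux_admissible mu g) < 1 + e'" using l1 e' by (simp add: lux_eq_Inf_admissible)
  then obtain lam where lam: "lam \<in> lux_admissible mu g" "lam < 1 + e'"
    using cInf_lessD[OF ne] by blast
  have lam1: "1 \<le> lam"
    using cInf_lower[OF lam(1) bdd_below_lux_admissible] l1 by (simp add: lux_eq_Inf_admissible)
  then have lam0: "lam > 0" by simp
  have N: "modular mu (\<lambda>x. g x / lam) \<le> 1" using lux_admissible_iff[OF g lam0] lam by simp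
  have "\<bar>1/lam - 1\<bar> = (lam - 1)/lam" using lam1 by (simp add: field_simps)
  also have "\<dots> \<le> lam - 1" using lam1 by (intro div_le_self_real) auto
  finally have a: "\<bar>1/lam - 1\<bar> \<le> e'" using lam by simp
  have "modular mu g \<le> 1 + 6 * e' * L"
    using modular_rescale(2)[OF g lam0] N mult_right_mono[OF a L0] unfolding L_def by simp
  also have "6 * e' * L = e * (6*L/(6*L+1))" by (simp add: e'_def field_simps)
  also have "\<dots> \<le> e * 1" using e L0 by (intro mult_left_mono) auto
  finally show "modular mu g \<le> 1 + e" by simp
qed

text \<open>On the unit sphere the modular is at least 1: otherwise a scaling \<open>\<lambda> < 1\<close> would be admissible.\<close>
lemma modular_ge_one_of_lux:
  assumes g: "integrable mu g" and l1: "lux mu g = 1"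
  shows "1 \<le> modular mu g"
proof (rule ccontr)
  assume "\<not> 1 \<le> modular mu g"
  define eta where "eta = 1 - modular mu g"
  have eta: "0 < eta" using \<open>\<not> 1 \<le> modular mu g\<close> by (simp add: eta_def)
  define L where "L = L1_norm mu g"
  have L0: "0 \<le> L" using L1_norm_nonneg unfolding L_def by blast
  define lam where "lam = 1 / (1 + eta / (6*L+1))"
  have q: "0 < eta/(6*L+1)" using eta L0 by simp
  have lam0: "lam > 0" and lam1: "lam < 1"
    unfolding lam_def using q by (auto simp: divide_less_eq)
  have il: "1/lam - 1 = eta / (6*L+1)" by (simp add: lam_def)
  have "modular mu (\<lambda>x. g x / lam) \<le> modular mu g + 6 * \<bar>1/lam - 1\<bar> * L"
    using modular_rescale(1)[OF g lam0] unfolding L_def by simp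
  also have "6 * \<bar>1/lam - 1\<bar> * L = eta * (6*L/(6*L+1))"
    using eta L0 unfolding il by (simp add: field_simps)
  also have "\<dots> \<le> eta * 1" using eta L0 by (intro mult_left_mono) auto
  finally have "modular mu (\<lambda>x. g x / lam) \<le> 1" by (simp add: eta_def)
  then have "lux mu g \<le> lam" using lux_le[OF g lam0] by simp
  then show False using l1 lam1 by simp
qed

lemma modular_unit_sphere:
  "integrable mu g \<Longrightarrow> lux mu g = 1 \<Longrightarrow> modular mu g = 1"
  using modular_le_one_of_lux modular_ge_one_of_lux by (metis order_antisym)

text \<open>On a probability space \<open>\<parallel>g\<parallel>\<^sub>1 \<le> N(g) + 1\<close>, since \<open>|t| \<le> M(t) + 1\<close>.\<close>
lemma L1_norm_le_modular:
  assumes mu: "prob_space mu" and g: "integrable mu g"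
  shows "L1_norm mu g \<le> modular mu g + 1"
proof -
  interpret prob_space mu by (rule mu)
  have "L1_norm mu g \<le> (\<integral>x. Mc (g x) + 1 \<partial>mu)"
    unfolding L1_norm_def using g by (intro integral_mono) (auto intro!: integrable_Mc abs_le_Mc)
  also have "\<dots> = modular mu g + 1"
    using g unfolding modular_def by (subst Bochner_Integration.integral_add) (auto intro!: integrable_Mc simp: prob_space)
  finally show ?thesis .
qed

lemma L1_norm_unit_sphere:
  "prob_space mu \<Longrightarrow> integrable mu g \<Longrightarrow> lux mu g = 1 \<Longrightarrow> L1_norm mu g \<le> 2"
  using L1_norm_le_modular[of mu g] modular_unit_sphere[of mu g] by simp

lemma lux_le_of_modular_defect:
  assumes g: "integrable mu g" and N: "modular mu g \<le> 1 - eta" and eta: "0 \<le> eta" "eta \<le> 12"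
    and L: "L1_norm mu g \<le> 2"
  shows "lux mu g \<le> 1 - eta/24"
proof -
  define lam where "lam = 1 / (1 + eta/12)"
  have lam0: "lam > 0" using eta by (simp add: lam_def)
  have il: "\<bar>1/lam - 1\<bar> = eta/12" using eta by (simp add: lam_def)
  have "modular mu (\<lambda>x. g x / lam) \<le> modular mu g + 6 * \<bar>1/lam - 1\<bar> * L1_norm mu g"
    using modular_rescale(1)[OF g lam0] by simp
  also have "\<dots> \<le> 1 - eta + 6 * (eta/12) * 2"
    using N L eta unfolding il by (intro add_mono mult_left_mono) auto
  finally have "lux mu g \<le> lam" using lux_le[OF g lam0] by simp
  also have "lam \<le> 1 - eta/24"
  proof -
    have "(1 - eta/24) * (1 + eta/12) = 1 + eta*(12-eta)/288" by (simp add: field_simps)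
    moreover have "0 \<le> eta*(12-eta)" using eta by simp
    ultimately have "1 \<le> (1 - eta/24) * (1 + eta/12)" by simp
    then show ?thesis using eta by (simp add: lam_def divide_le_eq)
  qed
  finally show ?thesis .
qed

section \<open>Uniform convexity\<close>

definition midpoint_weight :: "('a \<Rightarrow> real) \<Rightarrow> ('a \<Rightarrow> real) \<Rightarrow> 'a \<Rightarrow> real" where
  "midpoint_weight x y t = (x t - y t)\<^sup>2 / (1 + max \<bar>x t\<bar> \<bar>y t\<bar>)\<^sup>2"

lemma midpoint_weight_nonneg: "0 \<le> midpoint_weight x y t"
  by (simp add: midpoint_weight_def)

lemma integrable_midpoint_weight:
  assumes x: "integrable mu x" and y: "integrable mu y"
  shows "integrable mu (midpoint_weight x y)"
proof (rule Bochner_Integration.integrable_bound[where f="\<lambda>t. 2 * (x t - y t)"])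
  show "integrable mu (\<lambda>t. 2 * (x t - y t))" using x y by auto
  show "midpoint_weight x y \<in> borel_measurable mu"
    unfolding midpoint_weight_def[abs_def] using x y by measurable
  show "AE t in mu. norm (midpoint_weight x y t) \<le> norm (2 * (x t - y t))"
  proof (intro AE_I2)
    fix t
    define d w where "d = x t - y t" and "w = max \<bar>x t\<bar> \<bar>y t\<bar>"
    have w0: "0 \<le> w" by (simp add: w_def)
    have dw: "\<bar>d\<bar> \<le> 2 * (1 + w)" unfolding d_def w_def by auto
    have "d\<^sup>2 / (1 + w)\<^sup>2 = \<bar>d\<bar> * (\<bar>d\<bar> / (1 + w)) / (1 + w)"
      by (simp add: power2_eq_square)
    also have "\<dots> \<le> \<bar>d\<bar> * (\<bar>d\<bar> / (1 + w))" using w0 by (intro div_le_self_real) auto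
    also have "\<dots> \<le> \<bar>d\<bar> * 2" using dw w0 by (intro mult_left_mono) (auto simp: divide_le_eq)
    finally show "norm (midpoint_weight x y t) \<le> norm (2 * (x t - y t))"
      unfolding real_norm_def abs_mult midpoint_weight_def d_def w_def by simp
  qed
qed

lemma modular_midpoint:
  assumes x: "integrable mu x" and y: "integrable mu y"
  shows "modular mu (\<lambda>t. (x t + y t)/2)
           \<le> (modular mu x + modular mu y)/2 - (\<integral>t. midpoint_weight x y t \<partial>mu)/4"
proof -
  have W: "integrable mu (midpoint_weight x y)" by (rule integrable_midpoint_weight[OF x y])
  have "modular mu (\<lambda>t. (x t + y t)/2)
          \<le> (\<integral>t. (Mc (x t) + Mc (y t))/2 - midpoint_weight x y t / 4 \<partial>mu)"
    unfolding modular_def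
  proof (rule integral_mono)
    show "Mc ((x t + y t)/2) \<le> (Mc (x t) + Mc (y t))/2 - midpoint_weight x y t / 4" for t
      using Mc_midpoint[of "x t" "y t"] by (simp add: midpoint_weight_def)
  qed (use x y W in \<open>auto intro!: Bochner_Integration.integrable_diff integrable_divide_zero
                         Bochner_Integration.integrable_add integrable_Mc\<close>)
  also have "\<dots> = (modular mu x + modular mu y)/2 - (\<integral>t. midpoint_weight x y t \<partial>mu)/4"
    unfolding modular_def using x y W integrable_Mc[OF x] integrable_Mc[OF y]
    by (subst Bochner_Integration.integral_diff) auto
  finally show ?thesis .
qed

text \<open>Pointwise lower bound for the weight: where \<open>max |a| |b| \<le> K\<close> the weight is at least
  \<open>(a-b)\<^sup>2/(1+K)\<^sup>2\<close>; elsewhere the left hand side is nonpositive by Young's inequality.\<close>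
lemma midpoint_weight_pointwise:
  fixes a b D s K p :: real
  assumes D: "0 \<le> D" and s: "0 < s" and K: "0 < K" and p: "1 < p"
  shows "(D * \<bar>a - b\<bar> - D\<^sup>2/4 - D * s / K * (\<bar>a\<bar> + \<bar>b\<bar>) - D / s powr (p-1) * \<bar>a - b\<bar> powr p)
            / (1+K)\<^sup>2 \<le> (a - b)\<^sup>2 / (1 + max \<bar>a\<bar> \<bar>b\<bar>)\<^sup>2"
    (is "?N / (1+K)\<^sup>2 \<le> ?W")
proof (cases "max \<bar>a\<bar> \<bar>b\<bar> \<le> K")
  case True
  have "D * \<bar>a - b\<bar> - D\<^sup>2/4 \<le> (a - b)\<^sup>2"
    using zero_le_power2[of "\<bar>a - b\<bar> - D/2"] by (simp add: power2_eq_square algebra_simps)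
  moreover have "0 \<le> D * s / K * (\<bar>a\<bar> + \<bar>b\<bar>) + D / s powr (p-1) * \<bar>a - b\<bar> powr p"
    using D s K by simp
  ultimately have "?N / (1+K)\<^sup>2 \<le> (a - b)\<^sup>2 / (1+K)\<^sup>2" by (intro divide_right_mono) auto
  also have "\<dots> \<le> ?W"
    using True K by (intro divide_left_mono power_mono mult_pos_pos) auto
  finally show ?thesis .
next
  case False
  have "K \<le> \<bar>a\<bar> + \<bar>b\<bar>"
    using False abs_ge_zero[of a] abs_ge_zero[of b] by (auto simp: max_def split: if_splits)
  then have "s \<le> s * ((\<bar>a\<bar> + \<bar>b\<bar>) / K)"
    using K s mult_left_mono[of 1 "(\<bar>a\<bar> + \<bar>b\<bar>) / K" s] by (simp add: le_divide_eq)
  then have "\<bar>a - b\<bar> \<le> s * ((\<bar>a\<bar> + \<bar>b\<bar>) / K) + \<bar>a - b\<bar> powr p / s powr (p-1)"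
    using abs_le_young_powr[OF p s, of "a - b"] by linarith
  then have "D * \<bar>a - b\<bar> \<le> D * (s * ((\<bar>a\<bar> + \<bar>b\<bar>) / K) + \<bar>a - b\<bar> powr p / s powr (p-1))"
    using D by (intro mult_left_mono) auto
  also have "\<dots> = D * s / K * (\<bar>a\<bar> + \<bar>b\<bar>) + D / s powr (p-1) * \<bar>a - b\<bar> powr p"
    by (simp add: algebra_simps)
  finally have "?N \<le> 0" using zero_le_power2[of D] by linarith
  then have "?N / (1+K)\<^sup>2 \<le> 0" by (intro divide_nonpos_nonneg) auto
  moreover have "0 \<le> ?W" by simp
  ultimately show ?thesis by linarith
qed

definition convexity_level :: "real \<Rightarrow> real \<Rightarrow> real" where
  "convexity_level B p = 16 * (4 * B powr p) powr (1/(p-1))"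

lemma convexity_level_nonneg: "0 \<le> convexity_level B p"
  by (simp add: convexity_level_def)

text \<open>Choice of the Young parameter \<open>s = \<alpha> D\<close>, \<open>\<alpha>\<^sup>p\<^sup>-\<^sup>1 = 4B\<^sup>p\<close>: if \<open>I \<le> (BD)\<^sup>p\<close> then the error
  term \<open>D I / s\<^sup>p\<^sup>-\<^sup>1\<close> is at most \<open>D\<^sup>2/4\<close>.\<close>
lemma young_error_term_le:
  fixes B D I p :: real
  assumes p: "1 < p" and B: "0 < B" and D: "0 < D" and I: "I \<le> (B * D) powr p"
  shows "D / ((4 * B powr p) powr (1/(p-1)) * D) powr (p-1) * I \<le> D\<^sup>2/4"
proof -
  define s where "s = (4 * B powr p) powr (1/(p-1)) * D"
  have sp: "s powr (p-1) = 4 * B powr p * D powr (p-1)"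
    unfolding s_def using p B D by (simp add: powr_mult powr_powr)
  have "D / s powr (p-1) * I \<le> D / s powr (p-1) * (B * D) powr p"
    using I D sp B by (intro mult_left_mono) auto
  also have "(B * D) powr p = B powr p * D * D powr (p-1)"
    using powr_add[of D 1 "p-1"] D by (simp add: powr_mult)
  also have "D / s powr (p-1) * (B powr p * D * D powr (p-1)) = D\<^sup>2/4"
    unfolding sp using B D by (simp add: field_simps power2_eq_square)
  finally show ?thesis unfolding s_def .
qed

text \<open>Integrated lower bound for the weight: with \<open>s = \<alpha>\<parallel>x-y\<parallel>\<^sub>1\<close>, the \<open>L\<^sup>p\<close>-\<open>L\<^sup>1\<close> equivalence
  makes the error terms of the pointwise bound at most \<open>\<parallel>x-y\<parallel>\<^sub>1\<^sup>2/4\<close> each.\<close>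
lemma midpoint_weight_lower_bound:
  assumes mu: "prob_space mu" and p: "1 < p" and B: "0 < B"
    and x: "integrable mu x" and y: "integrable mu y"
    and L1x: "L1_norm mu x \<le> 2" and L1y: "L1_norm mu y \<le> 2"
    and dp: "integrable mu (\<lambda>t. \<bar>x t - y t\<bar> powr p)"
    and dLp: "Lp_norm mu p (\<lambda>t. x t - y t) \<le> B * L1_norm mu (\<lambda>t. x t - y t)"
  shows "(L1_norm mu (\<lambda>t. x t - y t))\<^sup>2 / (4*(1 + convexity_level B p)\<^sup>2)
           \<le> (\<integral>t. midpoint_weight x y t \<partial>mu)"
proof -
  interpret prob_space mu by (rule mu)
  define K where "K = convexity_level B p"
  define alpha where "alpha = (4 * B powr p) powr (1/(p-1))"
  define D where "D = L1_norm mu (\<lambda>t. x t - y t)"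
  have D0: "0 \<le> D" unfolding D_def by (rule L1_norm_nonneg)
  have alpha0: "0 < alpha" and K0: "0 < K"
    using B by (auto simp: alpha_def K_def convexity_level_def)
  define s where "s = alpha * D"
  show ?thesis
  proof (cases "D = 0")
    case True
    have "0 \<le> (\<integral>t. midpoint_weight x y t \<partial>mu)"
      by (rule integral_nonneg_AE) (simp add: midpoint_weight_nonneg)
    with True show ?thesis by (simp add: D_def)
  next
    case False
    then have D_pos: "0 < D" using D0 by simp
    then have s0: "0 < s" unfolding s_def using alpha0 by simp
    define R where "R t = (D * \<bar>x t - y t\<bar> - D\<^sup>2/4 - D * s / K * (\<bar>x t\<bar> + \<bar>y t\<bar>)
        - D / s powr (p-1) * \<bar>x t - y t\<bar> powr p) / (1+K)\<^sup>2" for t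
    have Ri: "integrable mu R" unfolding R_def using x y dp by auto
    have IntR: "(\<integral>t. R t \<partial>mu) = (D * D - D\<^sup>2/4 - D * s / K * (L1_norm mu x + L1_norm mu y)
        - D / s powr (p-1) * (\<integral>t. \<bar>x t - y t\<bar> powr p \<partial>mu)) / (1+K)\<^sup>2"
      unfolding R_def L1_norm_def D_def using x y dp by (simp add: prob_space distrib_left)
    have "(\<integral>t. \<bar>x t - y t\<bar> powr p \<partial>mu) \<le> (B * D) powr p"
      using dLp p by (intro powr_le_of_root_le integral_nonneg_AE) (auto simp: Lp_norm_def D_def)
    then have T3: "D / s powr (p-1) * (\<integral>t. \<bar>x t - y t\<bar> powr p \<partial>mu) \<le> D\<^sup>2/4"
      unfolding s_def alpha_def using young_error_term_le[OF p B D_pos] by simp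
    have "D * s / K * (L1_norm mu x + L1_norm mu y) \<le> D * s / K * 4"
      using L1x L1y D0 s0 K0 by (intro mult_left_mono) auto
    also have "\<dots> = D\<^sup>2/4"
      unfolding s_def K_def alpha_def convexity_level_def using B by (simp add: power2_eq_square)
    finally have T2: "D * s / K * (L1_norm mu x + L1_norm mu y) \<le> D\<^sup>2/4" .
    have "D\<^sup>2 / (4*(1+K)\<^sup>2) \<le> (\<integral>t. R t \<partial>mu)"
      unfolding IntR using T2 T3 K0
      by (intro divide_right_mono[of "D\<^sup>2/4" _ "(1+K)\<^sup>2", simplified]) (auto simp: power2_eq_square)
    also have "\<dots> \<le> (\<integral>t. midpoint_weight x y t \<partial>mu)"
      using midpoint_weight_pointwise[OF D0 s0 K0 p]
      by (intro integral_mono[OF Ri integrable_midpoint_weight[OF x y]])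
         (simp add: R_def midpoint_weight_def)
    finally show ?thesis unfolding K_def D_def .
  qed
qed

lemma uniform_convexity_estimate:
  assumes mu: "prob_space mu" and p: "1 < p" and B: "0 < B"
    and x: "integrable mu x" and y: "integrable mu y"
    and lx: "lux mu x = 1" and ly: "lux mu y = 1"
    and dp: "integrable mu (\<lambda>t. \<bar>x t - y t\<bar> powr p)"
    and dLp: "Lp_norm mu p (\<lambda>t. x t - y t) \<le> B * L1_norm mu (\<lambda>t. x t - y t)"
  shows "(lux mu (\<lambda>t. x t - y t))\<^sup>2 / (13824 * (1 + convexity_level B p)\<^sup>2)
           \<le> 1 - lux mu (\<lambda>t. (x t + y t)/2)"
proof -
  define K where "K = convexity_level B p"
  define Q where "Q = (\<integral>t. midpoint_weight x y t \<partial>mu)"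
  define D where "D = L1_norm mu (\<lambda>t. x t - y t)"
  have K0: "0 < K" using B by (simp add: K_def convexity_level_def)
  have Q0: "0 \<le> Q" unfolding Q_def by (rule integral_nonneg_AE) (simp add: midpoint_weight_nonneg)
  have L1x: "L1_norm mu x \<le> 2" and L1y: "L1_norm mu y \<le> 2"
    using L1_norm_unit_sphere[OF mu] x y lx ly by auto
  have gi: "integrable mu (\<lambda>t. (x t + y t)/2)" using x y by auto
  have "modular mu (\<lambda>t. (x t + y t)/2) \<le> 1 - Q/4"
    using modular_midpoint[OF x y] modular_unit_sphere[OF x lx] modular_unit_sphere[OF y ly]
    by (simp add: Q_def)
  moreover have "L1_norm mu (\<lambda>t. (x t + y t)/2) \<le> 2"
    using L1_norm_add_le[OF x y, of 1] L1x L1y L1_norm_scale[of mu "1/2" "\<lambda>t. x t + y t"]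
    by (simp add: add_divide_distrib)
  ultimately have mid: "lux mu (\<lambda>t. (x t + y t)/2) \<le> 1 - Q/96"
    using lux_le_of_modular_defect[OF gi, of "Q/4"] Q0 modular_nonneg[of mu "\<lambda>t. (x t + y t)/2"]
    by simp
  have "lux mu (\<lambda>t. x t - y t) \<le> 6 * D" unfolding D_def using x y by (intro lux_le_L1) auto
  then have "(lux mu (\<lambda>t. x t - y t))\<^sup>2 \<le> (6 * D)\<^sup>2"
    using x y by (intro power_mono lux_nonneg) auto
  also have "\<dots> = 36 * D\<^sup>2" by (simp add: power2_eq_square)
  also have "D\<^sup>2 \<le> Q * (4 * (1+K)\<^sup>2)"
    using midpoint_weight_lower_bound[OF mu p B x y L1x L1y dp dLp] K0
    by (simp add: Q_def D_def K_def pos_divide_le_eq)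
  then have "36 * D\<^sup>2 \<le> 144 * (1+K)\<^sup>2 * Q" by (simp add: mult_ac)
  finally have "(lux mu (\<lambda>t. x t - y t))\<^sup>2 / (13824 * (1+K)\<^sup>2)
      \<le> 144 * (1+K)\<^sup>2 * Q / (13824 * (1+K)\<^sup>2)"
    by (intro divide_right_mono) auto
  also have "\<dots> = Q/96" using K0 by (simp add: field_simps)
  finally show ?thesis using mid unfolding K_def by simp
qed

section \<open>Uniform smoothness\<close>

lemma modular_taylor:
  assumes p: "1 < p" "p \<le> 2" and x: "integrable mu x" and k: "integrable mu k"
    and kp: "integrable mu (\<lambda>t. \<bar>k t\<bar> powr p)"
  shows "modular mu (\<lambda>t. x t + k t)
           \<le> modular mu x + (\<integral>t. psi (x t) * k t \<partial>mu) + 12 * (\<integral>t. \<bar>k t\<bar> powr p \<partial>mu)"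
proof -
  have pk: "integrable mu (\<lambda>t. psi (x t) * k t)" using x k by (intro integrable_psi_mult) auto
  have "modular mu (\<lambda>t. x t + k t) \<le> (\<integral>t. Mc (x t) + psi (x t) * k t + 12 * \<bar>k t\<bar> powr p \<partial>mu)"
    unfolding modular_def
    using x k pk kp Mc_taylor[OF p] by (intro integral_mono) (auto intro!: integrable_Mc)
  also have "\<dots> = modular mu x + (\<integral>t. psi (x t) * k t \<partial>mu) + 12 * (\<integral>t. \<bar>k t\<bar> powr p \<partial>mu)"
    unfolding modular_def using integrable_Mc[OF x] pk kp by simp
  finally show ?thesis .
qed

lemma modular_le_psi_pairing:
  assumes x: "integrable mu x"
  shows "modular mu x \<le> (\<integral>t. psi (x t) * x t \<partial>mu)"
  unfolding modular_def using x Mc_le_mult_psi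
  by (intro integral_mono integrable_Mc integrable_psi_mult) (auto simp: mult.commute)

lemma psi_pairing_bound:
  assumes x: "x \<in> borel_measurable mu" and y: "integrable mu y"
  shows "\<bar>\<integral>t. psi (x t) * y t \<partial>mu\<bar> \<le> 6 * L1_norm mu y"
proof -
  have "\<bar>\<integral>t. psi (x t) * y t \<partial>mu\<bar> \<le> (\<integral>t. \<bar>psi (x t) * y t\<bar> \<partial>mu)"
    by (rule integral_abs_bound)
  also have "\<dots> \<le> (\<integral>t. 6 * \<bar>y t\<bar> \<partial>mu)"
    using y psi_bound integrable_abs[OF integrable_psi_mult[OF x y]]
    by (intro integral_mono) (auto simp: abs_mult intro!: mult_right_mono)
  finally show ?thesis by (simp add: L1_norm_def)
qed

lemma perturbation_powr_bound:
  fixes p lam a c u v :: real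
  assumes p: "1 < p" "p \<le> 2" and lam: "1/2 \<le> lam" and a: "\<bar>a\<bar> \<le> 13 * \<bar>c\<bar>"
  shows "\<bar>(c * v - a * u) / lam\<bar> powr p
           \<le> 16 * (\<bar>c\<bar> powr p * \<bar>v\<bar> powr p + 169 * (\<bar>c\<bar> powr p * \<bar>u\<bar> powr p))"
proof -
  have "\<bar>(c * v - a * u) / lam\<bar> \<le> 2 * \<bar>c * v - a * u\<bar>"
    using lam divide_left_mono[of "1/2" lam "\<bar>c * v - a * u\<bar>"] by simp
  also have "\<dots> \<le> 2 * (\<bar>c\<bar> * \<bar>v\<bar> + \<bar>a\<bar> * \<bar>u\<bar>)"
    using abs_triangle_ineq4[of "c * v" "a * u"] by (simp add: abs_mult)
  finally have "\<bar>(c * v - a * u) / lam\<bar> powr p \<le> 16 * ((\<bar>c\<bar> * \<bar>v\<bar>) powr p + (\<bar>a\<bar> * \<bar>u\<bar>) powr p)"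
    by (intro powr_le_sum_powr p) auto
  also have "(\<bar>a\<bar> * \<bar>u\<bar>) powr p \<le> 169 * (\<bar>c\<bar> powr p * \<bar>u\<bar> powr p)"
  proof -
    have "\<bar>a\<bar> powr p \<le> (13 * \<bar>c\<bar>) powr p" using a p by (intro powr_mono2) auto
    also have "\<dots> = 13 powr p * \<bar>c\<bar> powr p" by (simp add: powr_mult)
    also have "13 powr p \<le> (13::real) powr 2" using p by (intro powr_mono) auto
    then have "13 powr p * \<bar>c\<bar> powr p \<le> 169 * \<bar>c\<bar> powr p" by (intro mult_right_mono) auto
    finally have "\<bar>a\<bar> powr p * \<bar>u\<bar> powr p \<le> 169 * \<bar>c\<bar> powr p * \<bar>u\<bar> powr p"
      by (intro mult_right_mono) auto
    then show ?thesis by (simp add: powr_mult mult.assoc)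
  qed
  finally show ?thesis by (simp add: powr_mult)
qed

text \<open>Constants of the smoothness estimate for a bound P on \<open>\<parallel>x\<parallel>\<^sub>p\<^sup>p\<close>, \<open>\<parallel>y\<parallel>\<^sub>p\<^sup>p\<close>: the coefficient E of
  \<open>\<tau>\<^sup>p\<close> and the range \<open>\<tau> \<le> \<tau>\<^sub>0\<close> on which the first order bound holds.\<close>
definition smooth_coeff :: "real \<Rightarrow> real" where
  "smooth_coeff P = 65280 * P + 1"

definition smooth_radius :: "real \<Rightarrow> real \<Rightarrow> real" where
  "smooth_radius P p = min (1/26) ((1/smooth_coeff P) powr (1/(p-1)))"

lemma smooth_coeff_ge_1: "0 \<le> P \<Longrightarrow> 1 \<le> smooth_coeff P"
  by (simp add: smooth_coeff_def)

lemma smooth_radius_pos: "0 \<le> P \<Longrightarrow> 0 < smooth_radius P p"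
  using smooth_coeff_ge_1[of P] by (simp add: smooth_radius_def)

lemma smooth_remainder_le:
  fixes p E c :: real
  assumes p: "1 < p" and E: "1 \<le> E" and c: "\<bar>c\<bar> \<le> (1/E) powr (1/(p-1))"
  shows "E * \<bar>c\<bar> powr p \<le> \<bar>c\<bar>"
proof -
  have "\<bar>c\<bar> powr (p-1) \<le> ((1/E) powr (1/(p-1))) powr (p-1)"
    using c p by (intro powr_mono2) auto
  also have "\<dots> = 1/E" using p E by (simp add: powr_powr)
  finally have "E * (\<bar>c\<bar> * \<bar>c\<bar> powr (p-1)) \<le> E * (\<bar>c\<bar> * (1/E))"
    using E by (intro mult_left_mono) auto
  then show ?thesis using E powr_add[of "\<bar>c\<bar>" 1 "p-1"] by simp
qed

lemma perturbation_moment_bound: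
  fixes p lam a c P :: real
  assumes p: "1 < p" "p \<le> 2" and lam: "1/2 \<le> lam" and a: "\<bar>a\<bar> \<le> 13 * \<bar>c\<bar>"
    and x: "integrable mu x" and y: "integrable mu y"
    and xp: "integrable mu (\<lambda>t. \<bar>x t\<bar> powr p)" and yp: "integrable mu (\<lambda>t. \<bar>y t\<bar> powr p)"
    and Px: "(\<integral>t. \<bar>x t\<bar> powr p \<partial>mu) \<le> P" and Py: "(\<integral>t. \<bar>y t\<bar> powr p \<partial>mu) \<le> P"
  defines "k \<equiv> \<lambda>t. (c * y t - a * x t) / lam"
  shows "integrable mu (\<lambda>t. \<bar>k t\<bar> powr p)"
    and "(\<integral>t. \<bar>k t\<bar> powr p \<partial>mu) \<le> 2720 * (P * \<bar>c\<bar> powr p)"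
proof -
  define Bd where "Bd t = 16 * (\<bar>c\<bar> powr p * \<bar>y t\<bar> powr p + 169 * (\<bar>c\<bar> powr p * \<bar>x t\<bar> powr p))"
    for t
  have kbound: "\<bar>k t\<bar> powr p \<le> Bd t" for t
    unfolding k_def Bd_def by (rule perturbation_powr_bound[OF p lam a])
  have Bdi: "integrable mu Bd" unfolding Bd_def using xp yp by auto
  have "integrable mu k" unfolding k_def using x y by auto
  then show kpi: "integrable mu (\<lambda>t. \<bar>k t\<bar> powr p)"
    using kbound
    by (intro Bochner_Integration.integrable_bound[OF Bdi]) (auto intro: order_trans[OF _ abs_ge_self])
  have "(\<integral>t. \<bar>k t\<bar> powr p \<partial>mu) \<le> (\<integral>t. Bd t \<partial>mu)"
    using kpi Bdi kbound by (rule integral_mono)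
  also have "\<dots> = 16 * (\<bar>c\<bar> powr p * (\<integral>t. \<bar>y t\<bar> powr p \<partial>mu)
                       + 169 * (\<bar>c\<bar> powr p * (\<integral>t. \<bar>x t\<bar> powr p \<partial>mu)))"
    unfolding Bd_def using xp yp by simp
  also have "\<dots> \<le> 16 * (\<bar>c\<bar> powr p * P + 169 * (\<bar>c\<bar> powr p * P))"
    using Px Py by (intro mult_left_mono add_mono) auto
  finally show "(\<integral>t. \<bar>k t\<bar> powr p \<partial>mu) \<le> 2720 * (P * \<bar>c\<bar> powr p)"
    by (simp add: algebra_simps)
qed

lemma first_order_scaling_bound:
  fixes p P kap l c :: real
  assumes p: "1 < p" and P: "0 \<le> P" and kap: "1 \<le> kap" and l: "\<bar>l\<bar> \<le> 12"
    and c: "\<bar>c\<bar> \<le> smooth_radius P p"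
  shows "\<bar>c * l / kap + smooth_coeff P * \<bar>c\<bar> powr p\<bar> \<le> 13 * \<bar>c\<bar>" and "\<bar>c\<bar> \<le> 1/26"
proof -
  have "\<bar>c * l / kap\<bar> \<le> 12 * \<bar>c\<bar>"
    using kap div_le_self_real[of "\<bar>c\<bar> * \<bar>l\<bar>" kap] mult_left_mono[OF l, of "\<bar>c\<bar>"]
    by (simp add: abs_mult)
  moreover have "smooth_coeff P * \<bar>c\<bar> powr p \<le> \<bar>c\<bar>"
    using smooth_remainder_le[OF p smooth_coeff_ge_1[OF P], of c] c by (simp add: smooth_radius_def)
  moreover have "0 \<le> smooth_coeff P * \<bar>c\<bar> powr p" using smooth_coeff_ge_1[OF P] by simp
  ultimately show "\<bar>c * l / kap + smooth_coeff P * \<bar>c\<bar> powr p\<bar> \<le> 13 * \<bar>c\<bar>" by linarith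
  show "\<bar>c\<bar> \<le> 1/26" using c by (simp add: smooth_radius_def)
qed

text \<open>First order expansion of the Luxemburg norm at a unit vector x in direction y:
  with \<open>\<lambda> = 1 + c l/\<kappa> + E|c|\<^sup>p\<close>, where \<open>l = \<integral>psi(x) y\<close> and \<open>\<kappa> = \<integral>psi(x) x \<ge> 1\<close>, the first
  order term of \<open>N((x + c y)/\<lambda>)\<close> is \<open>-E|c|\<^sup>p \<kappa>/\<lambda>\<close>, which absorbs the remainder, so
  \<open>(x + c y)/\<lambda>\<close> lies in the unit ball.\<close>
lemma lux_first_order_bound:
  assumes mu: "prob_space mu" and p: "1 < p" "p \<le> 2"
    and x: "integrable mu x" and y: "integrable mu y"
    and lx: "lux mu x = 1" and ly: "lux mu y = 1"
    and xp: "integrable mu (\<lambda>t. \<bar>x t\<bar> powr p)" and yp: "integrable mu (\<lambda>t. \<bar>y t\<bar> powr p)"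
    and Px: "(\<integral>t. \<bar>x t\<bar> powr p \<partial>mu) \<le> P" and Py: "(\<integral>t. \<bar>y t\<bar> powr p \<partial>mu) \<le> P"
    and c: "\<bar>c\<bar> \<le> smooth_radius P p"
  shows "lux mu (\<lambda>t. x t + c * y t)
           \<le> 1 + c * (\<integral>t. psi (x t) * y t \<partial>mu) / (\<integral>t. psi (x t) * x t \<partial>mu)
               + smooth_coeff P * \<bar>c\<bar> powr p"
proof -
  define l where "l = (\<integral>t. psi (x t) * y t \<partial>mu)"
  define kap where "kap = (\<integral>t. psi (x t) * x t \<partial>mu)"
  define s where "s = c * l / kap"
  define R where "R = smooth_coeff P * \<bar>c\<bar> powr p"
  define lam where "lam = 1 + s + R"
  have "0 \<le> (\<integral>t. \<bar>x t\<bar> powr p \<partial>mu)" by (rule integral_nonneg_AE) simp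
  then have P0: "0 \<le> P" using Px by linarith
  have kap1: "1 \<le> kap"
    using modular_le_psi_pairing[OF x] modular_unit_sphere[OF x lx] by (simp add: kap_def)
  have "\<bar>l\<bar> \<le> 12"
    using psi_pairing_bound[of x mu y] L1_norm_unit_sphere[OF mu y ly] x y by (simp add: l_def)
  note scaling = first_order_scaling_bound[OF p(1) P0 kap1 this c]
  have sR: "\<bar>s + R\<bar> \<le> 13 * \<bar>c\<bar>" using scaling(1) by (simp add: s_def R_def)
  then have lam_lo: "1/2 \<le> lam" and lam_hi: "lam \<le> 3/2"
    using scaling(2) unfolding lam_def by linarith+
  have R0: "0 \<le> R" using smooth_coeff_ge_1[OF P0] by (simp add: R_def)
  define k where "k t = (c * y t - (s + R) * x t) / lam" for t
  have xk: "(x t + c * y t) / lam = x t + k t" for t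
    using lam_lo by (simp add: k_def lam_def field_simps)
  have ki: "integrable mu k" unfolding k_def using x y by auto
  note moment = perturbation_moment_bound[OF p lam_lo sR x y xp yp Px Py]
  have kpi: "integrable mu (\<lambda>t. \<bar>k t\<bar> powr p)" using moment(1) by (simp only: k_def)
  have "(\<integral>t. \<bar>k t\<bar> powr p \<partial>mu) \<le> 2720 * (P * \<bar>c\<bar> powr p)"
    using moment(2) by (simp only: k_def)
  moreover have "R * (2/3) = 2/3 * \<bar>c\<bar> powr p + 43520 * (P * \<bar>c\<bar> powr p)"
    unfolding R_def smooth_coeff_def by (simp add: algebra_simps)
  moreover have "0 \<le> P * \<bar>c\<bar> powr p" using P0 by simp
  ultimately have Ik: "12 * (\<integral>t. \<bar>k t\<bar> powr p \<partial>mu) \<le> R * (2/3)"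
    using powr_ge_zero[of "\<bar>c\<bar>" p] by linarith
  have "psi (x t) * k t = (c/lam) * (psi (x t) * y t) - ((s+R)/lam) * (psi (x t) * x t)" for t
    unfolding k_def using lam_lo by (simp add: field_simps)
  then have "(\<integral>t. psi (x t) * k t \<partial>mu) = (c/lam) * l - ((s+R)/lam) * kap"
    unfolding l_def kap_def using x y integrable_psi_mult[of x mu x] integrable_psi_mult[of x mu y]
    by simp
  also have "\<dots> = - R * kap / lam" using kap1 lam_lo by (simp add: s_def field_simps)
  finally have Ipk: "(\<integral>t. psi (x t) * k t \<partial>mu) = - R * (kap / lam)" by simp
  have "R * (2/3) \<le> R * (kap / lam)"
    using lam_hi lam_lo kap1 R0 by (intro mult_left_mono) (auto simp: field_simps)
  then have "modular mu (\<lambda>t. (x t + c * y t) / lam) \<le> 1"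
    unfolding xk using modular_taylor[OF p x ki kpi] modular_unit_sphere[OF x lx] Ipk Ik by simp
  then have "lux mu (\<lambda>t. x t + c * y t) \<le> lam"
    using x y lam_lo by (intro lux_le) auto
  then show ?thesis unfolding lam_def s_def R_def l_def kap_def .
qed

lemma lux_perturbation_trivial_bound:
  assumes mu: "prob_space mu" and x: "integrable mu x" and y: "integrable mu y"
    and lx: "lux mu x = 1" and ly: "lux mu y = 1"
  shows "lux mu (\<lambda>t. x t + c * y t) \<le> 12 + 12 * \<bar>c\<bar>"
proof -
  have "lux mu (\<lambda>t. x t + c * y t) \<le> 6 * L1_norm mu (\<lambda>t. x t + c * y t)"
    using x y by (intro lux_le_L1) auto
  also have "\<dots> \<le> 6 * (L1_norm mu x + \<bar>c\<bar> * L1_norm mu y)"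
    using L1_norm_add_le[OF x y, of c] by simp
  also have "\<dots> \<le> 6 * (2 + \<bar>c\<bar> * 2)"
    using L1_norm_unit_sphere[OF mu] x y lx ly by (intro mult_left_mono add_mono) auto
  finally show ?thesis by simp
qed

lemma affine_le_powr_beyond:
  fixes p t0 tau :: real
  assumes p: "1 < p" and t0: "0 < t0" and tau: "t0 \<le> tau"
  shows "12 + 12 * tau \<le> (12 / t0 powr p + 12 / t0 powr (p-1)) * tau powr p"
proof -
  have "12 \<le> 12 / t0 powr p * tau powr p"
    using tau t0 p powr_mono2[of p t0 tau] by (simp add: le_divide_eq)
  moreover have "tau powr (p-1) / t0 powr (p-1) \<ge> 1"
    using tau t0 p powr_mono2[of "p-1" t0 tau] by simp
  then have "12 * tau * 1 \<le> 12 * tau * (tau powr (p-1) / t0 powr (p-1))"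
    using tau t0 by (intro mult_left_mono) auto
  then have "12 * tau \<le> 12 / t0 powr (p-1) * tau powr p"
    using powr_add[of tau 1 "p-1"] tau t0 by simp
  ultimately show ?thesis by (simp add: distrib_right)
qed

lemma powr_moment_unit_sphere:
  assumes mu: "prob_space mu" and p: "1 < p" and B: "0 < B"
    and f: "integrable mu f" and lf: "lux mu f = 1" and fB: "Lp_norm mu p f \<le> B * L1_norm mu f"
  shows "(\<integral>t. \<bar>f t\<bar> powr p \<partial>mu) \<le> (2*B) powr p"
proof -
  have "(\<integral>t. \<bar>f t\<bar> powr p \<partial>mu) \<le> (B * L1_norm mu f) powr p"
    using fB p by (intro powr_le_of_root_le integral_nonneg_AE) (auto simp: Lp_norm_def)
  also have "\<dots> \<le> (2*B) powr p"
    using L1_norm_unit_sphere[OF mu f lf] B L1_norm_nonneg[of mu f] p by (intro powr_mono2) auto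
  finally show ?thesis .
qed

definition Lp_equivalent :: "'a measure \<Rightarrow> real \<Rightarrow> real \<Rightarrow> ('a \<Rightarrow> real) set \<Rightarrow> bool" where
  "Lp_equivalent mu p B X \<longleftrightarrow> (\<forall>f\<in>X. integrable mu f \<and> integrable mu (\<lambda>t. \<bar>f t\<bar> powr p)
      \<and> Lp_norm mu p f \<le> B * L1_norm mu f)"

text \<open>The constant C of the smoothness estimate: E on \<open>\<tau> \<le> \<tau>\<^sub>0\<close>, plus the trivial bound beyond.\<close>
definition smooth_const :: "real \<Rightarrow> real \<Rightarrow> real" where
  "smooth_const B p = (let P = (2*B) powr p; t0 = smooth_radius P p
     in smooth_coeff P + 12 / t0 powr p + 12 / t0 powr (p-1))"

lemma smooth_const_pos: "0 < smooth_const B p"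
  using smooth_radius_pos[of "(2*B) powr p" p] smooth_coeff_ge_1[of "(2*B) powr p"]
  by (simp add: smooth_const_def Let_def add_pos_nonneg)

text \<open>Smoothness of power type p for a single pair of unit vectors: for small \<open>\<tau>\<close> the first
  order terms of the expansions at \<open>\<plusminus>\<tau>\<close> cancel.\<close>
lemma smoothness_pair_bound:
  assumes mu: "prob_space mu" and p: "1 < p" "p \<le> 2" and B: "0 < B"
    and X: "Lp_equivalent mu p B X" and x: "x \<in> X" and y: "y \<in> X"
    and lx: "lux mu x = 1" and ly: "lux mu y = 1" and tau: "0 < tau"
  shows "(lux mu (\<lambda>t. x t + tau * y t) + lux mu (\<lambda>t. x t - tau * y t)) / 2 - 1
           \<le> smooth_const B p * tau powr p"
proof -
  define P where "P = (2*B) powr p"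
  define t0 where "t0 = smooth_radius P p"
  define C where "C = smooth_const B p"
  have xi: "integrable mu x" "integrable mu (\<lambda>t. \<bar>x t\<bar> powr p)"
    and yi: "integrable mu y" "integrable mu (\<lambda>t. \<bar>y t\<bar> powr p)"
    using X x y by (auto simp: Lp_equivalent_def)
  have Px: "(\<integral>t. \<bar>x t\<bar> powr p \<partial>mu) \<le> P" and Py: "(\<integral>t. \<bar>y t\<bar> powr p \<partial>mu) \<le> P"
    using powr_moment_unit_sphere[OF mu p(1) B] X x y lx ly by (auto simp: Lp_equivalent_def P_def)
  have t0: "0 < t0" unfolding t0_def P_def by (simp add: smooth_radius_pos)
  have C_split: "C = smooth_coeff P + (12 / t0 powr p + 12 / t0 powr (p-1))"
    by (simp add: C_def smooth_const_def P_def t0_def Let_def)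
  have minus: "(\<lambda>t. x t - tau * y t) = (\<lambda>t. x t + (-tau) * y t)" by simp
  show ?thesis
  proof (cases "tau \<le> t0")
    case True
    define u where "u = tau * (\<integral>t. psi (x t) * y t \<partial>mu) / (\<integral>t. psi (x t) * x t \<partial>mu)"
    note first_order = lux_first_order_bound[OF mu p xi(1) yi(1) lx ly xi(2) yi(2) Px Py]
    have "lux mu (\<lambda>t. x t + tau * y t) \<le> 1 + u + smooth_coeff P * tau powr p"
      using first_order[of tau] True tau by (simp add: u_def t0_def)
    moreover have "lux mu (\<lambda>t. x t - tau * y t) \<le> 1 - u + smooth_coeff P * tau powr p"
      using first_order[of "-tau"] True tau unfolding minus by (simp add: u_def t0_def)
    moreover have "smooth_coeff P * tau powr p \<le> C * tau powr p"
      unfolding C_split using t0 by (intro mult_right_mono) auto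
    ultimately show ?thesis unfolding C_def by (simp add: field_simps)
  next
    case False
    have "lux mu (\<lambda>t. x t + tau * y t) \<le> 12 + 12 * tau"
      and "lux mu (\<lambda>t. x t - tau * y t) \<le> 12 + 12 * tau"
      using lux_perturbation_trivial_bound[OF mu xi(1) yi(1) lx ly, of tau]
        lux_perturbation_trivial_bound[OF mu xi(1) yi(1) lx ly, of "-tau"] tau
      unfolding minus by auto
    moreover have "12 + 12 * tau \<le> (12 / t0 powr p + 12 / t0 powr (p-1)) * tau powr p"
      using affine_le_powr_beyond[OF p(1) t0, of tau] False by simp
    moreover have "\<dots> \<le> C * tau powr p"
      unfolding C_split using smooth_coeff_ge_1[of P] by (intro mult_right_mono) (auto simp: P_def)
    ultimately show ?thesis unfolding C_def by (simp add: field_simps)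
  qed
qed


lemma smoothness_power_type:
  assumes mu: "prob_space mu" and p: "1 < p" "p \<le> 2" and B: "0 < B"
    and X: "Lp_equivalent mu p B X"
  shows "\<exists>C>0. \<forall>tau>0. mod_smoothness mu X tau \<le> ereal (C * tau powr p)"
proof (intro exI[of _ "smooth_const B p"] conjI allI impI)
  fix tau :: real assume "0 < tau"
  then show "mod_smoothness mu X tau \<le> ereal (smooth_const B p * tau powr p)"
    unfolding mod_smoothness_def
    using smoothness_pair_bound[OF mu p B X] by (intro Sup_least) auto
qed (rule smooth_const_pos)

lemma convexity_power_type:
  assumes mu: "prob_space mu" and p: "1 < p" and B: "0 < B"
    and X: "Lp_equivalent mu p B X" and diff: "\<And>f g. f \<in> X \<Longrightarrow> g \<in> X \<Longrightarrow> (\<lambda>t. f t - g t) \<in> X"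
  shows "\<exists>c>0. \<forall>eps. mod_convexity mu X eps \<ge> ereal (c * eps\<^sup>2)"
proof (intro exI[of _ "1 / (13824 * (1 + convexity_level B p)\<^sup>2)"] conjI allI)
  show "0 < 1 / (13824 * (1 + convexity_level B p)\<^sup>2)"
    using convexity_level_nonneg[of B p] by (simp add: add_pos_nonneg)
  fix eps :: real
  show "ereal (1 / (13824 * (1 + convexity_level B p)\<^sup>2) * eps\<^sup>2) \<le> mod_convexity mu X eps"
    unfolding mod_convexity_def
  proof (rule Inf_greatest, clarify)
    fix x y assume x: "x \<in> X" and y: "y \<in> X" and lx: "lux mu x = 1" and ly: "lux mu y = 1"
    have "(\<lambda>t. x t - y t) \<in> X" by (rule diff[OF x y])
    then show "ereal (1 / (13824 * (1 + convexity_level B p)\<^sup>2) * (lux mu (\<lambda>t. x t - y t))\<^sup>2)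
        \<le> ereal (1 - lux mu (\<lambda>t. (x t + y t) / 2))"
      using uniform_convexity_estimate[OF mu p B _ _ lx ly] X x y
      by (auto simp: Lp_equivalent_def)
  qed
qed

lemma L1_subspace_diff:
  assumes "L1_subspace mu X" and "f \<in> X" and "g \<in> X"
  shows "(\<lambda>t. f t - g t) \<in> X"
proof -
  have add: "\<forall>f\<in>X. \<forall>g\<in>X. (\<lambda>x. f x + g x) \<in> X" and "(\<lambda>t. (-1) * g t) \<in> X"
    using assms unfolding L1_subspace_def by blast+
  then have "(\<lambda>t. f t + (\<lambda>t. (-1) * g t) t) \<in> X" using bspec[OF bspec[OF add assms(2)]] by blast
  then show ?thesis by simp
qed

theorem mainTheorem4:
  fixes mu :: "'a measure" and p :: real and X :: "('a \<Rightarrow> real) set"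
  assumes "prob_space mu"
    and "1 < p" and "p \<le> 2"
    and "L1_subspace mu X" and "L1_closed mu X"
    and "\<forall>f\<in>X. f \<in> borel_measurable mu \<and> integrable mu (\<lambda>x. \<bar>f x\<bar> powr p)"
    and "\<exists>A B. A > 0 \<and> B > 0 \<and> (\<forall>f\<in>X. A * L1_norm mu f \<le> Lp_norm mu p f \<and>
                                          Lp_norm mu p f \<le> B * L1_norm mu f)"
  shows "(\<exists>C>0. \<forall>tau>0. mod_smoothness mu X tau \<le> ereal (C * tau powr p))
       \<and> (\<exists>c>0. \<forall>eps. mod_convexity mu X eps \<ge> ereal (c * eps\<^sup>2))"
proof -
  obtain B where B: "B > 0" and BX: "\<forall>f\<in>X. Lp_norm mu p f \<le> B * L1_norm mu f"
    using assms(7) by blast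
  have X: "Lp_equivalent mu p B X"
    using assms(4,6) BX unfolding Lp_equivalent_def L1_subspace_def by blast
  show ?thesis
    using smoothness_power_type[OF assms(1-3) B X]
      convexity_power_type[OF assms(1,2) B X L1_subspace_diff[OF assms(4)]] by blast
qed

end
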